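(* Let $\phi\colon\mathbb{R}\to\mathbb{R}$ be an increasing homeomorphism with $\phi(0)=0$, $f\colon\mathbb{R}\to\mathbb{R}$ continuous, and $g\colon[0,T]\times\mathbb{R}\to\mathbb{R}$ a Carathéodory function such that there is $\rho\in L^1([0,T],\mathbb{R}^+)$ with $|g(t,u)|\le\rho(t)$ for a.e. $t\in[0,T]$ and all $u\in\mathbb{R}$. Consider, for $\bar u\in\mathbb{R}$ and $\lambda\in[0,1]$, the problem of finding $\tilde u\in\tilde{\mathfrak{D}}$ with $$(\phi(\tilde u'))'+f(\bar u+\tilde u)\tilde u'+\lambda g(t,\bar u+\tilde u)-\frac{\lambda}{T}\int_0^Tg(\xi,\bar u+\tilde u(\xi))\,d\xi=0\quad\text{a.e.}\qquad(\dagger_\lambda)$$ (a solution pair is $(\bar u,\tilde u)$). Then: (i) there exists $K=K(\phi,\rho)>0$ such that every solution pair $(\bar u,\tilde u)$ of $(\dagger_\lambda)$, $\lambda\in[0,1]$, satisfies $\|\tilde u'\|_{L^1}\le K$ and $\|\tilde u\|_\infty\le K$; (ii) for every $M>0$ there exists $M'=M'(\phi,f,\rho)>0$ such that every solution pair $(\bar u,\tilde u)$ of $(\dagger_1)$ with $|\bar u|\le M$ satisfies $\|\tilde u\|_{\mathcal{C}^1}\le M'$.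
   Context: $\mathfrak{D}=\{u\in\mathcal{C}^1([0,T]):u(0)=u(T),\,u'(0)=u'(T),\ \phi(u')\text{ absolutely continuous}\}$ and $\tilde{\mathfrak{D}}=\{u\in\mathfrak{D}:\int_0^Tu(t)\,dt=0\}$. $\|u\|_{\mathcal{C}^1}=\|u\|_\infty+\|u'\|_\infty$. A Carathéodory function is measurable in $t$, continuous in $u$, and locally $L^1$-bounded in $u$. $\mathbb{R}^+$ denotes the nonnegative reals. *)

theory Defs
  imports "HOL-Analysis.Analysis"
begin

definition abs_continuous_on :: "real set \<Rightarrow> (real \<Rightarrow> real) \<Rightarrow> bool" where
  "abs_continuous_on S h \<longleftrightarrow>
     (\<forall>e>0. \<exists>d>0. \<forall>(n::nat) (a::nat \<Rightarrow> real) b.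
        (\<forall>i<n. a i \<le> b i \<and> {a i..b i} \<subseteq> S) \<and>
        (\<forall>i<n. \<forall>j<n. i \<noteq> j \<longrightarrow> b i \<le> a j \<or> b j \<le> a i) \<and>
        (\<Sum>i<n. b i - a i) < d
        \<longrightarrow> (\<Sum>i<n. \<bar>h (b i) - h (a i)\<bar>) < e)"

definition incr_homeo :: "(real \<Rightarrow> real) \<Rightarrow> bool" where
  "incr_homeo \<phi> \<longleftrightarrow> strict_mono \<phi> \<and> (\<exists>\<psi>. homeomorphism UNIV UNIV \<phi> \<psi>)"

definition caratheodory :: "real \<Rightarrow> (real \<Rightarrow> real \<Rightarrow> real) \<Rightarrow> bool" where
  "caratheodory T g \<longleftrightarrow>
     (\<forall>u. (\<lambda>t. g t u) \<in> borel_measurable (lebesgue_on {0..T})) \<and>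
     (AE t in lebesgue_on {0..T}. continuous_on UNIV (g t)) \<and>
     (\<forall>r>0. \<exists>h. integrable (lebesgue_on {0..T}) h \<and>
        (AE t in lebesgue_on {0..T}. \<forall>u. \<bar>u\<bar> \<le> r \<longrightarrow> \<bar>g t u\<bar> \<le> h t))"

definition in_D :: "real \<Rightarrow> (real \<Rightarrow> real) \<Rightarrow> (real \<Rightarrow> real) \<Rightarrow> (real \<Rightarrow> real) \<Rightarrow> bool" where
  "in_D T \<phi> u u' \<longleftrightarrow>
     (\<forall>t\<in>{0..T}. (u has_real_derivative u' t) (at t within {0..T})) \<and>
     continuous_on {0..T} u' \<and>
     u 0 = u T \<and> u' 0 = u' T \<and>
     abs_continuous_on {0..T} (\<lambda>t. \<phi> (u' t))"

definition in_Dt :: "real \<Rightarrow> (real \<Rightarrow> real) \<Rightarrow> (real \<Rightarrow> real) \<Rightarrow> (real \<Rightarrow> real) \<Rightarrow> bool" where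
  "in_Dt T \<phi> u u' \<longleftrightarrow> in_D T \<phi> u u' \<and> integral {0..T} u = 0"

definition dagger_sol ::
  "real \<Rightarrow> (real \<Rightarrow> real) \<Rightarrow> (real \<Rightarrow> real) \<Rightarrow> (real \<Rightarrow> real \<Rightarrow> real) \<Rightarrow> real
   \<Rightarrow> real \<Rightarrow> (real \<Rightarrow> real) \<Rightarrow> (real \<Rightarrow> real) \<Rightarrow> bool" where
  "dagger_sol T \<phi> f g lam ub u u' \<longleftrightarrow>
     in_Dt T \<phi> u u' \<and>
     (AE t in lebesgue_on {0..T}.
        \<exists>w. ((\<lambda>s. \<phi> (u' s)) has_real_derivative w) (at t within {0..T}) \<and>
            w + f (ub + u t) * u' t + lam * g t (ub + u t)
              - lam / T * integral {0..T} (\<lambda>\<xi>. g \<xi> (ub + u \<xi>)) = 0)"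

end

theory Submission
  imports Defs
begin

(* With F a primitive of f, the energy E = phi(u') + F(ubar + u) absorbs the friction term:
   it is absolutely continuous and, by the equation, E' = lam/T * (integral of g) - lam * g
   almost everywhere, so |E'| <= rho + ||rho||_1 / T and E oscillates by at most 2 ||rho||_1.
   If u'(t) > 0, periodicity gives a time s with u(s) = u(t) and u'(s) <= 0; there the
   F-terms of E agree, so phi(u'(t)) <= E(t) - E(s) <= 2 ||rho||_1, and symmetrically from
   below. Inverting phi bounds |u'| by a constant depending only on phi and rho, and u, having
   mean zero, vanishes somewhere, so |u| <= T sup |u'|.
   The oscillation bound is the fundamental theorem of calculus for absolutely continuous
   functions in inequality form; it follows from the change-of-variables inequality on the set
   where E is differentiable together with the fact that E maps null sets to null sets. *)

definition nonoverlapping_intervals ::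
    "real set \<Rightarrow> nat \<Rightarrow> (nat \<Rightarrow> real) \<Rightarrow> (nat \<Rightarrow> real) \<Rightarrow> bool" where
  "nonoverlapping_intervals S n a b \<longleftrightarrow>
     (\<forall>i<n. a i \<le> b i \<and> {a i..b i} \<subseteq> S) \<and>
     (\<forall>i<n. \<forall>j<n. i \<noteq> j \<longrightarrow> b i \<le> a j \<or> b j \<le> a i)"

lemma abs_continuous_on_iff:
  "abs_continuous_on S h \<longleftrightarrow>
     (\<forall>e>0. \<exists>d>0. \<forall>n a b. nonoverlapping_intervals S n a b \<and> (\<Sum>i<n. b i - a i) < d
        \<longrightarrow> (\<Sum>i<n. \<bar>h (b i) - h (a i)\<bar>) < e)"
  unfolding abs_continuous_on_def nonoverlapping_intervals_def by (simp add: conj_assoc)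

lemma abs_continuous_onE:
  assumes "abs_continuous_on S h" "e > 0"
  obtains d where "d > 0"
    "\<And>n a b. nonoverlapping_intervals S n a b \<Longrightarrow> (\<Sum>i<n. b i - a i) < d
       \<Longrightarrow> (\<Sum>i<n. \<bar>h (b i) - h (a i)\<bar>) < e"
proof -
  obtain d where "d > 0" and "\<forall>n a b. nonoverlapping_intervals S n a b \<and> (\<Sum>i<n. b i - a i) < d
      \<longrightarrow> (\<Sum>i<n. \<bar>h (b i) - h (a i)\<bar>) < e"
    using assms(1)[unfolded abs_continuous_on_iff, rule_format, OF assms(2)] by blast
  then show thesis by (intro that) auto
qed

lemma abs_continuous_on_add:
  assumes "abs_continuous_on S f" "abs_continuous_on S g"
  shows "abs_continuous_on S (\<lambda>t. f t + g t)"
  unfolding abs_continuous_on_iff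
proof (intro allI impI)
  fix e :: real assume "e > 0"
  then have e2: "e/2 > 0" by simp
  obtain d1 where "d1 > 0"
    and f: "\<And>n a b. nonoverlapping_intervals S n a b \<Longrightarrow> (\<Sum>i<n. b i - a i) < d1
              \<Longrightarrow> (\<Sum>i<n. \<bar>f (b i) - f (a i)\<bar>) < e/2"
    using abs_continuous_onE[OF assms(1) e2] by blast
  obtain d2 where "d2 > 0"
    and g: "\<And>n a b. nonoverlapping_intervals S n a b \<Longrightarrow> (\<Sum>i<n. b i - a i) < d2
              \<Longrightarrow> (\<Sum>i<n. \<bar>g (b i) - g (a i)\<bar>) < e/2"
    using abs_continuous_onE[OF assms(2) e2] by blast
  show "\<exists>d>0. \<forall>n a b. nonoverlapping_intervals S n a b \<and> (\<Sum>i<n. b i - a i) < d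
          \<longrightarrow> (\<Sum>i<n. \<bar>f (b i) + g (b i) - (f (a i) + g (a i))\<bar>) < e"
  proof (intro exI[of _ "min d1 d2"] conjI allI impI)
    fix n a b assume ab: "nonoverlapping_intervals S n a b \<and> (\<Sum>i<n. b i - a i) < min d1 d2"
    have "(\<Sum>i<n. \<bar>f (b i) + g (b i) - (f (a i) + g (a i))\<bar>)
        \<le> (\<Sum>i<n. \<bar>f (b i) - f (a i)\<bar>) + (\<Sum>i<n. \<bar>g (b i) - g (a i)\<bar>)"
      unfolding sum.distrib[symmetric] by (rule sum_mono) linarith
    also have "\<dots> < e/2 + e/2"
      using f g ab by (intro add_strict_mono) auto
    finally show "(\<Sum>i<n. \<bar>f (b i) + g (b i) - (f (a i) + g (a i))\<bar>) < e" by simp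
  qed (use \<open>d1 > 0\<close> \<open>d2 > 0\<close> in auto)
qed

lemma lipschitz_on_imp_abs_continuous_on:
  assumes "L-lipschitz_on S h"
  shows "abs_continuous_on S h"
  unfolding abs_continuous_on_iff
proof (intro allI impI)
  fix e :: real assume e: "e > 0"
  have L: "L \<ge> 0" using lipschitz_on_nonneg[OF assms] .
  show "\<exists>d>0. \<forall>n a b. nonoverlapping_intervals S n a b \<and> (\<Sum>i<n. b i - a i) < d
          \<longrightarrow> (\<Sum>i<n. \<bar>h (b i) - h (a i)\<bar>) < e"
  proof (intro exI[of _ "e / (L + 1)"] conjI allI impI)
    show "e / (L + 1) > 0" using e L by simp
    fix n a b assume ab: "nonoverlapping_intervals S n a b \<and> (\<Sum>i<n. b i - a i) < e / (L + 1)"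
    have "(\<Sum>i<n. \<bar>h (b i) - h (a i)\<bar>) \<le> (\<Sum>i<n. (L + 1) * (b i - a i))"
    proof (rule sum_mono)
      fix i assume "i \<in> {..<n}"
      then have "a i \<in> S" "b i \<in> S" "a i \<le> b i"
        using ab unfolding nonoverlapping_intervals_def by (auto simp: subset_iff)
      then have "\<bar>h (b i) - h (a i)\<bar> \<le> L * (b i - a i)"
        using lipschitz_onD[OF assms, of "b i" "a i"] by (simp add: dist_real_def)
      also have "\<dots> \<le> (L + 1) * (b i - a i)"
        using \<open>a i \<le> b i\<close> by (simp add: mult_right_mono)
      finally show "\<bar>h (b i) - h (a i)\<bar> \<le> (L + 1) * (b i - a i)" .
    qed
    also have "\<dots> = (L + 1) * (\<Sum>i<n. b i - a i)" by (simp add: sum_distrib_left)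
    also have "\<dots> < e"
      using ab L by (simp add: field_simps)
    finally show "(\<Sum>i<n. \<bar>h (b i) - h (a i)\<bar>) < e" .
  qed
qed

lemma continuous_derivative_imp_lipschitz_on:
  assumes "\<And>t. t \<in> {a..b} \<Longrightarrow> (h has_real_derivative h' t) (at t within {a..b})"
    and "continuous_on {a..b} h'"
  obtains L where "L-lipschitz_on {a..b} h"
proof -
  obtain L where L: "\<And>t. t \<in> {a..b} \<Longrightarrow> \<bar>h' t\<bar> \<le> L"
    using compact_imp_bounded[OF compact_continuous_image[OF assms(2) compact_Icc]]
    by (force simp: bounded_iff)
  then have "\<bar>h x - h y\<bar> \<le> L * \<bar>x - y\<bar>" if "x \<in> {a..b}" "y \<in> {a..b}" for x y
    using field_differentiable_bound[of "{a..b}" h h' L x y] assms(1) that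
    by (auto simp: convex_real_interval)
  moreover have "L \<ge> 0 \<or> {a..b} = {}" using L by force
  ultimately show ?thesis
    by (intro that[of "max L 0"] lipschitz_onI) (auto simp: dist_real_def intro: order_trans)
qed

lemma abs_continuous_on_imp_continuous_on:
  assumes "abs_continuous_on {a..b} z"
  shows "continuous_on {a..b} z"
  unfolding continuous_on_iff
proof (intro ballI allI impI)
  fix x e :: real assume x: "x \<in> {a..b}" and "0 < e"
  obtain d where "d > 0"
    and d: "\<And>n p q. nonoverlapping_intervals {a..b} n p q \<Longrightarrow> (\<Sum>i<n. q i - p i) < d
              \<Longrightarrow> (\<Sum>i<n. \<bar>z (q i) - z (p i)\<bar>) < e"
    using abs_continuous_onE[OF assms \<open>0 < e\<close>] by blast
  have "dist (z y) (z x) < e" if y: "y \<in> {a..b}" "dist y x < d" for y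
  proof -
    have "\<bar>z (max x y) - z (min x y)\<bar> < e"
      using d[of 1 "\<lambda>_. min x y" "\<lambda>_. max x y"] x y
      by (auto simp: nonoverlapping_intervals_def dist_real_def)
    then show ?thesis
      by (auto simp: dist_real_def max_def min_def abs_minus_commute split: if_splits)
  qed
  with \<open>d > 0\<close> show "\<exists>d>0. \<forall>y\<in>{a..b}. dist y x < d \<longrightarrow> dist (z y) (z x) < e" by blast
qed

lemma continuous_image_interval_measure_le:
  fixes z :: "real \<Rightarrow> real"
  assumes "continuous_on {c..d} z" "c \<le> d"
  obtains p q where "c \<le> p" "p \<le> q" "q \<le> d" "z ` {c..d} \<in> lmeasurable"
    "measure lebesgue (z ` {c..d}) \<le> \<bar>z q - z p\<bar>"
proof -
  obtain x where x: "x \<in> {c..d}" "\<And>t. t \<in> {c..d} \<Longrightarrow> z x \<le> z t"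
    using continuous_attains_inf[OF compact_Icc _ assms(1)] assms(2) by auto
  obtain y where y: "y \<in> {c..d}" "\<And>t. t \<in> {c..d} \<Longrightarrow> z t \<le> z y"
    using continuous_attains_sup[OF compact_Icc _ assms(1)] assms(2) by auto
  have lm: "z ` {c..d} \<in> lmeasurable"
    by (intro lmeasurable_compact compact_continuous_image assms(1) compact_Icc)
  have "measure lebesgue (z ` {c..d}) \<le> measure lebesgue {z x..z y}"
    by (rule measure_mono_fmeasurable) (use x y lm in \<open>auto dest: fmeasurableD\<close>)
  also have "\<dots> = \<bar>z y - z x\<bar>"
    using x y by simp
  finally show ?thesis
    using x y lm by (intro that[of "min x y" "max x y"]) (auto simp: min_def max_def abs_minus_commute)
qed

lemma interior_disjoint_subintervals_nonoverlapping:
  fixes c d p q :: "nat \<Rightarrow> real"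
  assumes intervals: "\<And>i. i < m \<Longrightarrow> c i < d i \<and> a \<le> c i \<and> d i \<le> b \<and> c i \<le> p i \<and> p i \<le> q i \<and> q i \<le> d i"
    and disjoint: "\<And>i j. i < m \<Longrightarrow> j < m \<Longrightarrow> i \<noteq> j \<Longrightarrow> {c i<..<d i} \<inter> {c j<..<d j} = {}"
  shows "nonoverlapping_intervals {a..b} m p q"
  unfolding nonoverlapping_intervals_def
proof (intro conjI allI impI)
  fix i assume "i < m"
  with intervals show "p i \<le> q i" "{p i..q i} \<subseteq> {a..b}"
    by fastforce+
next
  fix i j assume ij: "i < m" "j < m" "i \<noteq> j"
  have "d i \<le> c j \<or> d j \<le> c i"
  proof (rule ccontr)
    assume "\<not> (d i \<le> c j \<or> d j \<le> c i)"
    then have "(max (c i) (c j) + min (d i) (d j)) / 2 \<in> {c i<..<d i} \<inter> {c j<..<d j}"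
      using intervals[OF ij(1)] intervals[OF ij(2)] by auto
    with disjoint[OF ij] show False by blast
  qed
  then show "q i \<le> p j \<or> q j \<le> p i"
    using intervals[OF ij(1)] intervals[OF ij(2)] by linarith
qed

lemma measure_Union_interior_disjoint_intervals:
  fixes \<D> :: "real set set"
  assumes "finite \<D>" "\<And>K. K \<in> \<D> \<Longrightarrow> \<exists>c d. K = {c..d}"
    and "pairwise (\<lambda>A B. interior A \<inter> interior B = {}) \<D>"
  shows "measure lebesgue (\<Union>\<D>) = (\<Sum>K\<in>\<D>. measure lebesgue K)"
proof (rule measure_negligible_finite_Union[OF assms(1)])
  show "K \<in> lmeasurable" if "K \<in> \<D>" for K
    using assms(2)[OF that] by auto
  show "pairwise (\<lambda>S T. negligible (S \<inter> T)) \<D>"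
    unfolding pairwise_def
  proof (intro ballI impI)
    fix S T assume ST: "S \<in> \<D>" "T \<in> \<D>" "S \<noteq> T"
    then have "interior (S \<inter> T) = {}"
      using assms(3) by (auto simp: pairwise_def)
    moreover have "convex (S \<inter> T)"
      using assms(2) ST by (metis convex_Int convex_real_interval(5))
    ultimately show "negligible (S \<inter> T)"
      using negligible_convex_interior by blast
  qed
qed

lemma abs_continuous_on_measure_image_intervals_le:
  fixes z :: "real \<Rightarrow> real" and c d :: "nat \<Rightarrow> real"
  assumes cont: "continuous_on {a..b} z"
    and ac: "\<And>n p q. nonoverlapping_intervals {a..b} n p q \<Longrightarrow> (\<Sum>i<n. q i - p i) < \<delta>
               \<Longrightarrow> (\<Sum>i<n. \<bar>z (q i) - z (p i)\<bar>) < e"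
    and intervals: "\<And>i. i < m \<Longrightarrow> c i < d i \<and> a \<le> c i \<and> d i \<le> b"
    and disjoint: "\<And>i j. i < m \<Longrightarrow> j < m \<Longrightarrow> i \<noteq> j \<Longrightarrow> {c i<..<d i} \<inter> {c j<..<d j} = {}"
    and short: "(\<Sum>i<m. d i - c i) < \<delta>"
  shows "measure lebesgue (\<Union>i<m. z ` {c i..d i}) \<le> e"
proof -
  have "\<exists>p q. c i \<le> p \<and> p \<le> q \<and> q \<le> d i \<and> z ` {c i..d i} \<in> lmeasurable \<and>
          measure lebesgue (z ` {c i..d i}) \<le> \<bar>z q - z p\<bar>" if "i < m" for i
  proof -
    have "continuous_on {c i..d i} z" "c i \<le> d i"
      using continuous_on_subset[OF cont] intervals[OF that] by auto
    then show ?thesis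
      by (metis continuous_image_interval_measure_le)
  qed
  then obtain p q where pq: "\<And>i. i < m \<Longrightarrow> c i \<le> p i \<and> p i \<le> q i \<and> q i \<le> d i \<and>
      z ` {c i..d i} \<in> lmeasurable \<and> measure lebesgue (z ` {c i..d i}) \<le> \<bar>z (q i) - z (p i)\<bar>"
    by metis
  have nonov: "nonoverlapping_intervals {a..b} m p q"
    using intervals pq disjoint
    by (intro interior_disjoint_subintervals_nonoverlapping[where c = c and d = d]) auto
  have "(\<Sum>i<m. q i - p i) \<le> (\<Sum>i<m. d i - c i)"
    using pq by (intro sum_mono) fastforce
  with short have "(\<Sum>i<m. q i - p i) < \<delta>"
    by linarith
  then have "(\<Sum>i<m. \<bar>z (q i) - z (p i)\<bar>) < e"
    by (rule ac[OF nonov])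
  moreover have "measure lebesgue (\<Union>i<m. z ` {c i..d i}) \<le> (\<Sum>i<m. measure lebesgue (z ` {c i..d i}))"
    using pq by (intro measure_UNION_le) (auto dest: fmeasurableD)
  moreover have "\<dots> \<le> (\<Sum>i<m. \<bar>z (q i) - z (p i)\<bar>)"
    using pq by (intro sum_mono) auto
  ultimately show ?thesis by linarith
qed

lemma abs_continuous_on_measure_image_Union_le:
  fixes z :: "real \<Rightarrow> real"
  assumes cont: "continuous_on {a..b} z"
    and ac: "\<And>n p q. nonoverlapping_intervals {a..b} n p q \<Longrightarrow> (\<Sum>i<n. q i - p i) < \<delta>
               \<Longrightarrow> (\<Sum>i<n. \<bar>z (q i) - z (p i)\<bar>) < e"
    and \<D>: "finite \<D>" "\<And>K. K \<in> \<D> \<Longrightarrow> \<exists>c d. c < d \<and> K = {c..d} \<and> K \<subseteq> {a..b}"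
      "pairwise (\<lambda>A B. interior A \<inter> interior B = {}) \<D>" "measure lebesgue (\<Union>\<D>) < \<delta>"
  shows "measure lebesgue (\<Union>K\<in>\<D>. z ` K) \<le> e"
proof -
  define lo hi where "lo = (Inf :: real set \<Rightarrow> real)" and "hi = (Sup :: real set \<Rightarrow> real)"
  have lohi: "lo K < hi K \<and> {lo K..hi K} = K \<and> a \<le> lo K \<and> hi K \<le> b" if K: "K \<in> \<D>" for K
  proof -
    obtain c d where "c < d" "K = {c..d}" "K \<subseteq> {a..b}"
      using \<D>(2)[OF K] by blast
    then show ?thesis by (auto simp: lo_def hi_def)
  qed
  define m where "m = card \<D>"
  obtain h where h: "bij_betw h {..<m} \<D>"
    using ex_bij_betw_nat_finite[OF \<D>(1)] by (auto simp: m_def lessThan_atLeast0)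
  have hD: "h i \<in> \<D>" if "i < m" for i
    using h that by (auto simp: bij_betw_def)
  have "{lo (h i)<..<hi (h i)} \<inter> {lo (h j)<..<hi (h j)} = {}" if "i < m" "j < m" "i \<noteq> j" for i j
  proof -
    have "h i \<noteq> h j"
      using h that by (auto simp: bij_betw_def inj_on_def)
    then have "interior (h i) \<inter> interior (h j) = {}"
      using \<D>(3) hD that by (auto simp: pairwise_def)
    then show ?thesis
      using lohi[OF hD[OF that(1)]] lohi[OF hD[OF that(2)]] by (metis interior_atLeastAtMost_real)
  qed
  moreover have "(\<Sum>i<m. hi (h i) - lo (h i)) < \<delta>"
  proof -
    have "hi (h i) - lo (h i) = measure lebesgue (h i)" if "i < m" for i
    proof -
      have "hi (h i) - lo (h i) = measure lebesgue {lo (h i)..hi (h i)}"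
        using lohi[OF hD[OF that], THEN conjunct1] by simp
      also have "\<dots> = measure lebesgue (h i)"
        using lohi[OF hD[OF that]] by simp
      finally show ?thesis .
    qed
    then have "(\<Sum>i<m. hi (h i) - lo (h i)) = (\<Sum>K\<in>\<D>. measure lebesgue K)"
      using sum.reindex_bij_betw[OF h, of "measure lebesgue"] by simp
    also have "\<dots> = measure lebesgue (\<Union>\<D>)"
      using measure_Union_interior_disjoint_intervals[OF \<D>(1) _ \<D>(3)] lohi by metis
    finally show ?thesis using \<D>(4) by simp
  qed
  ultimately have "measure lebesgue (\<Union>i<m. z ` {lo (h i)..hi (h i)}) \<le> e"
    using lohi[OF hD] by (intro abs_continuous_on_measure_image_intervals_le[OF cont ac]) auto
  moreover have "(\<Union>i<m. z ` {lo (h i)..hi (h i)}) = (\<Union>K\<in>\<D>. z ` K)"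
    using lohi[OF hD] bij_betw_imp_surj_on[OF h] by auto
  ultimately show ?thesis by simp
qed

lemma negligible_outer_intervals:
  fixes N :: "real set"
  assumes N: "negligible N" "N \<subseteq> {a..b}" and "a < b" "\<delta> > 0"
  obtains \<D> where "countable \<D>" "\<And>K. K \<in> \<D> \<Longrightarrow> \<exists>c d. c < d \<and> K = {c..d} \<and> K \<subseteq> {a..b}"
    "pairwise (\<lambda>A B. interior A \<inter> interior B = {}) \<D>" "N \<subseteq> \<Union>\<D>"
    "\<And>\<D>'. \<D>' \<subseteq> \<D> \<Longrightarrow> finite \<D>' \<Longrightarrow> measure lebesgue (\<Union>\<D>') < \<delta>"
proof -
  obtain \<D> where "countable \<D>"
    and \<D>: "\<And>K. K \<in> \<D> \<Longrightarrow> K \<subseteq> cbox a b \<and> K \<noteq> {} \<and> (\<exists>c d. K = cbox c d)"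
    and disj: "pairwise (\<lambda>A B. interior A \<inter> interior B = {}) \<D>"
    and int: "\<And>K. K \<in> \<D> \<Longrightarrow> box a b \<noteq> {} \<Longrightarrow> interior K \<noteq> {}"
    and cover: "N \<subseteq> \<Union>\<D>" and "\<Union>\<D> \<in> lmeasurable"
    and small: "measure lebesgue (\<Union>\<D>) \<le> measure lebesgue N + \<delta>/2"
    by (rule measurable_outer_intervals_bounded[of N a b "\<delta>/2"])
       (use N negligible_imp_measurable \<open>\<delta> > 0\<close> in auto)
  have intervals: "\<exists>c d. c < d \<and> K = {c..d} \<and> K \<subseteq> {a..b}" if K: "K \<in> \<D>" for K
  proof -
    obtain c d where "K = {c..d}" "K \<subseteq> {a..b}"
      using \<D>[OF K] by auto
    moreover have "interior K \<noteq> {}"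
      using int[OF K] \<open>a < b\<close> by simp
    ultimately show ?thesis by auto
  qed
  have "measure lebesgue (\<Union>\<D>') < \<delta>" if "\<D>' \<subseteq> \<D>" "finite \<D>'" for \<D>'
  proof -
    have "\<Union>\<D>' \<in> lmeasurable"
      using that \<D> by (intro fmeasurable.finite_Union) auto
    then have "measure lebesgue (\<Union>\<D>') \<le> measure lebesgue (\<Union>\<D>)"
      using \<open>\<D>' \<subseteq> \<D>\<close> \<open>\<Union>\<D> \<in> lmeasurable\<close>
      by (intro measure_mono_fmeasurable) (auto dest: fmeasurableD)
    then show ?thesis
      using small N negligible_imp_measure0 \<open>\<delta> > 0\<close> by fastforce
  qed
  with \<open>countable \<D>\<close> intervals disj cover show thesis
    by (rule that)
qed

lemma negligible_abs_continuous_image: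
  fixes z :: "real \<Rightarrow> real"
  assumes ac: "abs_continuous_on {a..b} z" and N: "negligible N" "N \<subseteq> {a..b}"
  shows "negligible (z ` N)"
proof (cases "a < b")
  case False
  then have "N \<subseteq> {a}" using N(2) by fastforce
  then have "z ` N \<subseteq> {z a}" by auto
  then show ?thesis using negligible_subset negligible_sing by metis
next
  case True
  have cont: "continuous_on {a..b} z"
    by (rule abs_continuous_on_imp_continuous_on[OF ac])
  show ?thesis unfolding negligible_outer_le
  proof (intro allI impI)
    fix e :: real assume "e > 0"
    obtain \<delta> where "\<delta> > 0"
      and \<delta>: "\<And>n p q. nonoverlapping_intervals {a..b} n p q \<Longrightarrow> (\<Sum>i<n. q i - p i) < \<delta>
               \<Longrightarrow> (\<Sum>i<n. \<bar>z (q i) - z (p i)\<bar>) < e"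
      using abs_continuous_onE[OF ac \<open>e > 0\<close>] by blast
    obtain \<D> where "countable \<D>"
      and intervals: "\<And>K. K \<in> \<D> \<Longrightarrow> \<exists>c d. c < d \<and> K = {c..d} \<and> K \<subseteq> {a..b}"
      and disj: "pairwise (\<lambda>A B. interior A \<inter> interior B = {}) \<D>" and "N \<subseteq> \<Union>\<D>"
      and small: "\<And>\<D>'. \<D>' \<subseteq> \<D> \<Longrightarrow> finite \<D>' \<Longrightarrow> measure lebesgue (\<Union>\<D>') < \<delta>"
      by (rule negligible_outer_intervals[OF N True \<open>\<delta> > 0\<close>]) iprover
    have image_meas: "z ` K \<in> lmeasurable" if "K \<in> \<D>" for K
      using intervals[OF that] continuous_on_subset[OF cont]
      by (metis compact_Icc compact_continuous_image lmeasurable_compact)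
    have bound: "measure lebesgue (\<Union>K\<in>\<D>'. z ` K) \<le> e" if "\<D>' \<subseteq> \<D>" "finite \<D>'" for \<D>'
      using intervals that pairwise_subset[OF disj \<open>\<D>' \<subseteq> \<D>\<close>] small[OF that]
      by (intro abs_continuous_on_measure_image_Union_le[OF cont \<delta>]) auto
    have "z ` N \<subseteq> (\<Union>K\<in>\<D>. z ` K)"
      using \<open>N \<subseteq> \<Union>\<D>\<close> by auto
    then show "\<exists>T. z ` N \<subseteq> T \<and> T \<in> lmeasurable \<and> measure lebesgue T \<le> e"
      using fmeasurable_UN_bound[OF \<open>countable \<D>\<close> image_meas bound]
        measure_UN_bound[OF \<open>countable \<D>\<close> image_meas bound] by blast
  qed
qed

lemma lmeasurable_vec_image:
  fixes A :: "real set"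
  assumes "vec ` A \<in> (lmeasurable :: (real^1) set set)"
  shows "A \<in> lmeasurable" "measure lebesgue A = measure lebesgue (vec ` A :: (real^1) set)"
proof -
  let ?m = "measure lebesgue (vec ` A :: (real^1) set)"
  have "((\<lambda>x::real^1. 1::real) has_integral ?m) (vec ` A)"
    using assms lmeasure_integral lmeasurable_iff_integrable_on has_integral_iff by metis
  then have "(((\<lambda>x::real^1. 1::real) \<circ> vec) has_integral ?m) ((\<lambda>x. x $ 1) ` (vec ` A :: (real^1) set))"
    by (rule has_integral_vec1_I)
  moreover have "(\<lambda>x. x $ 1) ` (vec ` A :: (real^1) set) = A"
    by (auto simp: image_image)
  ultimately have "((\<lambda>x::real. 1::real) has_integral ?m) A"
    by (simp add: o_def)
  then show "A \<in> lmeasurable" "measure lebesgue A = ?m"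
    using lmeasurable_iff_integrable_on lmeasure_integral has_integral_iff by metis+
qed

lemma has_real_derivative_vec1:
  fixes z :: "real \<Rightarrow> real"
  assumes "(z has_real_derivative D) (at t within S)"
  shows "((\<lambda>x::real^1. vec (z (x $ 1)) :: real^1) has_derivative (\<lambda>v. D *\<^sub>R v)) (at (vec t) within vec ` S)"
proof -
  have "(\<lambda>v. v * D) = (*) D"
    by (auto simp: fun_eq_iff)
  then have "(z has_derivative (\<lambda>v. v * (\<lambda>_. D) t)) (at t within S)"
    using assms unfolding has_field_derivative_def by simp
  from has_derivative_vector_1[OF this] show ?thesis
    by (simp add: fun_eq_iff)
qed

text \<open>The library states the change-of-variables inequality on \<open>real^1\<close>; we transport it.\<close>

lemma measure_differentiable_image_le_integral:
  fixes z z' k :: "real \<Rightarrow> real"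
  assumes S: "S \<in> sets lebesgue"
    and deriv: "\<And>x. x \<in> S \<Longrightarrow> (z has_real_derivative z' x) (at x within S)"
    and k: "k integrable_on S" and bound: "\<And>x. x \<in> S \<Longrightarrow> \<bar>z' x\<bar> \<le> k x"
  shows "z ` S \<in> lmeasurable" "measure lebesgue (z ` S) \<le> integral S k"
proof -
  define S' where "S' = (vec ` S :: (real^1) set)"
  define f where "f = (\<lambda>x::real^1. vec (z (x $ 1)) :: real^1)"
  define f' where "f' = (\<lambda>x::real^1. (\<lambda>v::real^1. z' (x $ 1) *\<^sub>R v))"
  have S': "S' \<in> sets lebesgue"
    unfolding S'_def by (auto intro: differentiable_image_in_sets_lebesgue [OF S] differentiable_vec)
  have f': "(f has_derivative f' x) (at x within S')" if x: "x \<in> S'" for x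
  proof -
    obtain t where "t \<in> S" "x = vec t"
      using x unfolding S'_def by auto
    then show ?thesis
      using has_real_derivative_vec1[OF deriv] unfolding f_def f'_def S'_def by simp
  qed
  have det: "\<bar>det (matrix (f' x))\<bar> = \<bar>z' (x $ 1)\<bar>" for x
    unfolding f'_def by (simp add: matrix_scaleR det_1 mat_def)
  have "((k \<circ> (\<lambda>x. x $ 1)) has_integral integral S k) S'"
  proof (rule has_integral_vec1_D)
    have "(\<lambda>x. x $ 1) ` S' = S"
      unfolding S'_def by (auto simp: image_image)
    then show "((k \<circ> (\<lambda>x. x $ 1)) \<circ> vec has_integral integral S k) ((\<lambda>x. x $ 1) ` S')"
      using k by (simp add: o_def has_integral_iff)
  qed
  then have k': "(k \<circ> (\<lambda>x. x $ 1)) integrable_on S'"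
    and k'_integral: "integral S' (k \<circ> (\<lambda>x. x $ 1)) = integral S k"
    by (auto simp: has_integral_iff)
  have bound': "norm \<bar>det (matrix (f' x))\<bar> \<le> (k \<circ> (\<lambda>x. x $ 1)) x" if "x \<in> S'" for x
    using that bound unfolding S'_def det by auto
  have "(\<lambda>x. \<bar>det (matrix (f' x))\<bar>) \<in> borel_measurable (lebesgue_on S')"
    using borel_measurable_det_Jacobian[OF S' f'] by (rule borel_measurable_abs)
  then have int: "(\<lambda>x. \<bar>det (matrix (f' x))\<bar>) integrable_on S'"
    by (rule measurable_bounded_by_integrable_imp_integrable[OF _ k' bound' S'])
  have "integral S' (\<lambda>x. \<bar>det (matrix (f' x))\<bar>) \<le> integral S' (k \<circ> (\<lambda>x. x $ 1))"
    by (rule integral_le[OF int k']) (use bound' in simp)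
  then have "measure lebesgue (f ` S') \<le> integral S k"
    using measure_differentiable_image[OF S' f' int] k'_integral by linarith
  moreover have "f ` S' = vec ` (z ` S)"
    unfolding f_def S'_def by (auto simp: image_image)
  ultimately show "z ` S \<in> lmeasurable" "measure lebesgue (z ` S) \<le> integral S k"
    using measurable_differentiable_image[OF S' f' int] lmeasurable_vec_image[of "z ` S"] by simp_all
qed

lemma continuous_on_interval_image_between:
  fixes z :: "real \<Rightarrow> real"
  assumes "continuous_on {a..b} z" "s \<in> {a..b}" "t \<in> {a..b}"
  shows "{min (z s) (z t)..max (z s) (z t)} \<subseteq> z ` {a..b}"
proof -
  have "is_interval (z ` {a..b})"
    using connected_continuous_image[OF assms(1)] by (simp add: is_interval_connected_1)
  moreover have "min (z s) (z t) \<in> z ` {a..b}" "max (z s) (z t) \<in> z ` {a..b}"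
    using assms(2,3) by (auto simp: min_def max_def)
  ultimately show ?thesis
    unfolding is_interval_1 by auto
qed

lemma abs_continuous_on_dist_le_integral:
  fixes z z' k :: "real \<Rightarrow> real"
  assumes ac: "abs_continuous_on {a..b} z" and N: "negligible N"
    and deriv: "\<And>x. x \<in> {a..b} - N \<Longrightarrow> (z has_real_derivative z' x) (at x within {a..b})"
    and k: "k integrable_on {a..b}" and bound: "\<And>x. x \<in> {a..b} - N \<Longrightarrow> \<bar>z' x\<bar> \<le> k x"
    and st: "s \<in> {a..b}" "t \<in> {a..b}"
  shows "\<bar>z t - z s\<bar> \<le> integral {a..b} k"
proof -
  define S where "S = {a..b} - N"
  have S: "S \<in> sets lebesgue"
    unfolding S_def using negligible_imp_sets[OF N] by auto
  have "{x \<in> {a..b} - S. k x \<noteq> 0} \<subseteq> N" "{x \<in> S - {a..b}. k x \<noteq> 0} = {}"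
    unfolding S_def by auto
  then have "negligible {x \<in> {a..b} - S. k x \<noteq> 0}" "negligible {x \<in> S - {a..b}. k x \<noteq> 0}"
    using negligible_subset[OF N] negligible_empty by metis+
  then have "(k has_integral integral {a..b} k) S"
    using k has_integral_spike_set_eq by blast
  then have k_S: "k integrable_on S" and "integral S k = integral {a..b} k"
    by (auto simp: has_integral_iff)
  moreover have "(z has_real_derivative z' x) (at x within S)" if "x \<in> S" for x
    using deriv[of x] that unfolding S_def by (meson Diff_subset has_field_derivative_subset)
  moreover have "\<bar>z' x\<bar> \<le> k x" if "x \<in> S" for x
    using bound that unfolding S_def .
  ultimately have zS: "z ` S \<in> lmeasurable" "measure lebesgue (z ` S) \<le> integral {a..b} k"
    using measure_differentiable_image_le_integral[OF S _ k_S, of z z'] by auto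
  have "negligible (z ` ({a..b} \<inter> N))"
    using negligible_abs_continuous_image[OF ac negligible_subset[OF N]] by blast
  then have zN: "z ` ({a..b} \<inter> N) \<in> lmeasurable" "measure lebesgue (z ` ({a..b} \<inter> N)) = 0"
    by (simp_all add: negligible_imp_measurable negligible_imp_measure0)
  have "\<bar>z t - z s\<bar> = measure lebesgue {min (z s) (z t)..max (z s) (z t)}"
    by (simp add: min_def max_def abs_if)
  also have "\<dots> \<le> measure lebesgue (z ` S \<union> z ` ({a..b} \<inter> N))"
    using continuous_on_interval_image_between[OF abs_continuous_on_imp_continuous_on[OF ac] st]
      zS zN unfolding S_def by (intro measure_mono_fmeasurable) auto
  also have "\<dots> \<le> measure lebesgue (z ` S) + measure lebesgue (z ` ({a..b} \<inter> N))"
    using zS zN by (intro measure_Un_le) (auto dest: fmeasurableD)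
  also have "\<dots> \<le> integral {a..b} k"
    using zS zN by simp
  finally show ?thesis .
qed

lemma deriv_nonpos_if_left_above:
  fixes u :: "real \<Rightarrow> real"
  assumes deriv: "(u has_real_derivative D) (at s within S)" and "p < s" "{p..s} \<subseteq> S"
    and above: "\<And>r. p \<le> r \<Longrightarrow> r < s \<Longrightarrow> u s < u r"
  shows "D \<le> 0"
proof (rule ccontr)
  assume "\<not> D \<le> 0"
  then obtain d where "d > 0" and d: "\<And>h. h > 0 \<Longrightarrow> s - h \<in> S \<Longrightarrow> h < d \<Longrightarrow> u (s - h) < u s"
    using has_real_derivative_pos_inc_left[OF deriv] by force
  define h where "h = min (d/2) (s - p)"
  have "h > 0" "h < d" "h \<le> s - p"
    using \<open>d > 0\<close> \<open>p < s\<close> unfolding h_def by auto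
  moreover have "s - h \<in> S"
    using assms(3) \<open>h > 0\<close> \<open>h \<le> s - p\<close> by (auto simp: subset_iff)
  ultimately have "u (s - h) < u s"
    using d by blast
  moreover have "u s < u (s - h)"
    using above[of "s - h"] \<open>h > 0\<close> \<open>h \<le> s - p\<close> by auto
  ultimately show False by simp
qed

lemma first_downcrossing:
  fixes u u' :: "real \<Rightarrow> real"
  assumes pq: "0 \<le> p" "p < q" "q \<le> T"
    and deriv: "\<And>t. t \<in> {0..T} \<Longrightarrow> (u has_real_derivative u' t) (at t within {0..T})"
    and "u p > c" "u q \<le> c"
  obtains s where "s \<in> {0..T}" "u s = c" "u' s \<le> 0"
proof -
  have "continuous_on {0..T} u"
    using deriv by (meson DERIV_continuous continuous_on_eq_continuous_within)
  then have cont: "continuous_on {p..q} u"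
    by (rule continuous_on_subset) (use pq in auto)
  define A where "A = {r \<in> {p..q}. u r \<le> c}"
  have "closed A"
    unfolding A_def by (rule continuous_on_closed_Collect_le[OF cont continuous_on_const]) auto
  moreover have "A \<noteq> {}" "bdd_below A"
    using assms pq unfolding A_def by (auto intro: bdd_belowI[of _ p])
  ultimately have "Inf A \<in> A"
    by (rule closed_contains_Inf[rotated -1])
  define s where "s = Inf A"
  have s: "p \<le> s" "s \<le> q" "u s \<le> c"
    using \<open>Inf A \<in> A\<close> unfolding s_def A_def by auto
  have above: "u r > c" if "p \<le> r" "r < s" for r
  proof (rule ccontr)
    assume "\<not> u r > c"
    then have "r \<in> A" using that s unfolding A_def by auto
    then have "s \<le> r" unfolding s_def using \<open>bdd_below A\<close> by (rule cInf_lower)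
    with that show False by simp
  qed
  have "p < s" using s \<open>u p > c\<close> by (cases "p = s") auto
  then obtain r where r: "p \<le> r" "r \<le> s" "u r = c"
    using IVT2'[of u s c p] s \<open>u p > c\<close> continuous_on_subset[OF cont, of "{p..s}"] by auto
  then have "u s = c" using above[of r] by (cases "r < s") auto
  have "s \<in> {0..T}" "{p..s} \<subseteq> {0..T}"
    using s pq by auto
  then have "u' s \<le> 0"
    using deriv_nonpos_if_left_above[OF deriv[OF \<open>s \<in> {0..T}\<close>] \<open>p < s\<close>] above \<open>u s = c\<close>
    by auto
  with s pq \<open>u s = c\<close> show thesis
    by (intro that[of s]) auto
qed

lemma periodic_level_nonpos_derivative:
  fixes u u' :: "real \<Rightarrow> real"
  assumes T: "0 < T"
    and deriv: "\<And>t. t \<in> {0..T} \<Longrightarrow> (u has_real_derivative u' t) (at t within {0..T})"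
    and periodic: "u 0 = u T" "u' 0 = u' T"
    and t: "t \<in> {0..T}" "u' t > 0"
  obtains s where "s \<in> {0..T}" "u s = u t" "u' s \<le> 0"
proof -
  have *: "\<exists>s\<in>{0..T}. u s = u t \<and> u' s \<le> 0" if t: "0 \<le> t" "t < T" "u' t > 0" for t
  proof -
    obtain d where "d > 0" and d: "\<And>h. h > 0 \<Longrightarrow> t + h \<in> {0..T} \<Longrightarrow> h < d \<Longrightarrow> u t < u (t + h)"
      using has_real_derivative_pos_inc_right[OF deriv, of t] t by fastforce
    define t1 where "t1 = t + min (d/2) (T - t)"
    have t1: "t < t1" "t1 \<le> T" "u t < u t1"
      using d[of "min (d/2) (T - t)"] \<open>d > 0\<close> t unfolding t1_def by auto
    show ?thesis
    proof (cases "u T \<le> u t")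
      case True
      then have "t1 < T" using t1 by (cases "t1 = T") auto
      obtain s where "s \<in> {0..T}" "u s = u t" "u' s \<le> 0"
        by (rule first_downcrossing[of t1 T T u u' "u t"]) (use t1 t deriv True \<open>t1 < T\<close> in auto)
      then show ?thesis by blast
    next
      case False
      then have "u t < u 0" "0 < t"
        using periodic t by (auto simp: order.order_iff_strict)
      obtain s where "s \<in> {0..T}" "u s = u t" "u' s \<le> 0"
        by (rule first_downcrossing[of 0 t T u u' "u t"]) (use t deriv \<open>u t < u 0\<close> \<open>0 < t\<close> in auto)
      then show ?thesis by blast
    qed
  qed
  have "\<exists>s\<in>{0..T}. u s = u t \<and> u' s \<le> 0"
  proof (cases "t = T")
    case True
    then show ?thesis using *[of 0] periodic t T by auto
  next
    case False
    then show ?thesis using *[of t] t by auto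
  qed
  then show thesis using that by blast
qed

lemma periodic_level_nonneg_derivative:
  fixes u u' :: "real \<Rightarrow> real"
  assumes T: "0 < T"
    and deriv: "\<And>t. t \<in> {0..T} \<Longrightarrow> (u has_real_derivative u' t) (at t within {0..T})"
    and periodic: "u 0 = u T" "u' 0 = u' T"
    and t: "t \<in> {0..T}" "u' t < 0"
  obtains s where "s \<in> {0..T}" "u s = u t" "u' s \<ge> 0"
proof -
  have "((\<lambda>x. - u x) has_real_derivative - u' s) (at s within {0..T})" if "s \<in> {0..T}" for s
    using deriv[OF that] by (rule DERIV_minus)
  then obtain s where "s \<in> {0..T}" "- u s = - u t" "- u' s \<le> 0"
    using periodic_level_nonpos_derivative[OF T, of "\<lambda>x. - u x" "\<lambda>x. - u' x" t] periodic t by auto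
  then show thesis using that by auto
qed

lemma continuous_on_zero_integral_imp_root:
  fixes u :: "real \<Rightarrow> real"
  assumes "a < b" "continuous_on {a..b} u" "integral {a..b} u = 0"
  obtains t where "t \<in> {a..b}" "u t = 0"
proof -
  obtain x where x: "x \<in> {a..b}" "\<And>y. y \<in> {a..b} \<Longrightarrow> u x \<le> u y"
    using continuous_attains_inf[OF compact_Icc _ assms(2)] assms(1) by auto
  obtain y where y: "y \<in> {a..b}" "\<And>t. t \<in> {a..b} \<Longrightarrow> u t \<le> u y"
    using continuous_attains_sup[OF compact_Icc _ assms(2)] assms(1) by auto
  have integrable: "u integrable_on {a..b}"
    by (rule integrable_continuous_interval[OF assms(2)])
  have "integral {a..b} (\<lambda>_. u x) \<le> integral {a..b} u"
    by (rule integral_le[OF integrable_const_ivl integrable]) (use x in auto)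
  then have "(b - a) * u x \<le> 0"
    using assms by simp
  then have "u x \<le> 0"
    using mult_pos_pos[of "b - a" "u x"] assms(1) by linarith
  have "integral {a..b} u \<le> integral {a..b} (\<lambda>_. u y)"
    by (rule integral_le[OF integrable integrable_const_ivl]) (use y in auto)
  then have "0 \<le> (b - a) * u y"
    using assms by simp
  then have "0 \<le> u y"
    using mult_pos_neg[of "b - a" "u y"] assms(1) by linarith
  then have "0 \<in> {min (u x) (u y)..max (u x) (u y)}"
    using \<open>u x \<le> 0\<close> by simp
  then have "0 \<in> u ` {a..b}"
    using continuous_on_interval_image_between[OF assms(2) x(1) y(1)] by blast
  then obtain t where "t \<in> {a..b}" "u t = 0"
    by (metis imageE)
  then show thesis by (rule that)
qed

lemma AE_lebesgue_on_intervalE: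
  fixes a b :: real
  assumes "AE t in lebesgue_on {a..b}. P t"
  obtains N where "negligible N" "\<And>t. t \<in> {a..b} - N \<Longrightarrow> P t"
proof -
  obtain N where N: "\<And>t. t \<in> space (lebesgue_on {a..b}) - N \<Longrightarrow> P t"
    "N \<in> null_sets (lebesgue_on {a..b})"
    using AE_E3[OF assms] by blast
  have "N \<in> null_sets lebesgue"
    using N(2) null_sets_restrict_space[of "{a..b}" lebesgue N] by auto
  then have "negligible N"
    by (simp add: negligible_iff_null_sets)
  with N(1) show thesis
    by (intro that[of N]) auto
qed

text \<open>No integrability of \<open>h\<close> is assumed, since a non-integrable function has integral \<open>0\<close>.\<close>

lemma abs_integral_le_AE_bound:
  fixes h \<rho> :: "real \<Rightarrow> real"
  assumes bound: "AE t in lebesgue_on {a..b}. \<bar>h t\<bar> \<le> \<rho> t"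
    and \<rho>: "\<rho> integrable_on {a..b}" "\<And>t. t \<in> {a..b} \<Longrightarrow> 0 \<le> \<rho> t"
  shows "\<bar>integral {a..b} h\<bar> \<le> integral {a..b} \<rho>"
proof (cases "h integrable_on {a..b}")
  case True
  obtain N where "negligible N" and N: "\<And>t. t \<in> {a..b} - N \<Longrightarrow> \<bar>h t\<bar> \<le> \<rho> t"
    using AE_lebesgue_on_intervalE[OF bound] by blast
  define h0 where "h0 t = (if t \<in> N then 0 else h t)" for t
  have "integral {a..b} h = integral {a..b} h0"
    by (rule integral_spike[OF \<open>negligible N\<close>]) (simp add: h0_def)
  moreover have h0: "h0 integrable_on {a..b}"
    by (rule integrable_spike[OF True \<open>negligible N\<close>]) (simp add: h0_def)
  moreover have "norm (integral {a..b} h0) \<le> integral {a..b} \<rho>"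
    by (rule integral_norm_bound_integral[OF h0 \<rho>(1)]) (use N \<rho>(2) in \<open>auto simp: h0_def\<close>)
  ultimately show ?thesis by simp
next
  case False
  have "0 \<le> integral {a..b} \<rho>"
    using \<rho> by (intro integral_nonneg) auto
  with False show ?thesis
    by (simp add: not_integrable_integral)
qed

lemma composition_antiderivative:
  fixes f u u' :: "real \<Rightarrow> real"
  assumes f: "continuous_on UNIV f"
    and deriv: "\<And>t. t \<in> {a..b} \<Longrightarrow> (u has_real_derivative u' t) (at t within {a..b})"
  obtains F where
    "\<And>t. t \<in> {a..b} \<Longrightarrow> ((\<lambda>t. F (u t)) has_real_derivative f (u t) * u' t) (at t within {a..b})"
proof -
  have "continuous_on {a..b} u"
    using deriv by (meson DERIV_continuous continuous_on_eq_continuous_within)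
  then obtain L where L: "\<And>t. t \<in> {a..b} \<Longrightarrow> \<bar>u t\<bar> \<le> L"
    using compact_imp_bounded[OF compact_continuous_image[OF _ compact_Icc]]
    by (force simp: bounded_iff)
  define F where "F x = integral {-L..x} f" for x
  have F: "(F has_real_derivative f y) (at y within {-L..L})" if "y \<in> {-L..L}" for y
    unfolding F_def by (rule integral_has_real_derivative[OF continuous_on_subset[OF f] that]) auto
  have "((\<lambda>t. F (u t)) has_real_derivative f (u t) * u' t) (at t within {a..b})"
    if t: "t \<in> {a..b}" for t
  proof -
    have "u ` {a..b} \<subseteq> {-L..L}"
      using L by (force simp: abs_le_iff)
    then have "(F has_real_derivative f (u t)) (at (u t) within u ` {a..b})"
      using has_field_derivative_subset[OF F] t by blast
    from DERIV_image_chain[OF this deriv[OF t]] show ?thesis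
      by (simp add: o_def)
  qed
  then show thesis by (rule that)
qed

lemma dagger_sol_energy_derivative:
  fixes \<phi> f u u' :: "real \<Rightarrow> real" and g :: "real \<Rightarrow> real \<Rightarrow> real"
  assumes f: "continuous_on UNIV f" and sol: "dagger_sol T \<phi> f g lam ub u u'"
  obtains F N where "negligible N"
    "abs_continuous_on {0..T} (\<lambda>t. \<phi> (u' t) + F (ub + u t))"
    "\<And>t. t \<in> {0..T} - N \<Longrightarrow> ((\<lambda>t. \<phi> (u' t) + F (ub + u t)) has_real_derivative
        lam / T * integral {0..T} (\<lambda>\<xi>. g \<xi> (ub + u \<xi>)) - lam * g t (ub + u t)) (at t within {0..T})"
proof -
  define c where "c = integral {0..T} (\<lambda>\<xi>. g \<xi> (ub + u \<xi>))"
  from sol have deriv: "\<And>t. t \<in> {0..T} \<Longrightarrow> (u has_real_derivative u' t) (at t within {0..T})"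
    and u'_cont: "continuous_on {0..T} u'"
    and ac_phi: "abs_continuous_on {0..T} (\<lambda>t. \<phi> (u' t))"
    and ae: "AE t in lebesgue_on {0..T}. \<exists>w. ((\<lambda>s. \<phi> (u' s)) has_real_derivative w) (at t within {0..T}) \<and>
              w + f (ub + u t) * u' t + lam * g t (ub + u t) - lam / T * c = 0"
    unfolding dagger_sol_def in_Dt_def in_D_def c_def by auto
  have "((\<lambda>t. ub + u t) has_real_derivative u' t) (at t within {0..T})" if "t \<in> {0..T}" for t
    using deriv[OF that] by (auto intro!: derivative_eq_intros)
  then obtain F where F: "\<And>t. t \<in> {0..T} \<Longrightarrow>
      ((\<lambda>t. F (ub + u t)) has_real_derivative f (ub + u t) * u' t) (at t within {0..T})"
    using composition_antiderivative[OF f] by blast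
  have "continuous_on {0..T} u"
    using deriv by (meson DERIV_continuous continuous_on_eq_continuous_within)
  then have "continuous_on {0..T} (\<lambda>t. f (ub + u t) * u' t)"
    by (intro continuous_intros u'_cont continuous_on_compose2[OF f]) auto
  then obtain L where "L-lipschitz_on {0..T} (\<lambda>t. F (ub + u t))"
    using continuous_derivative_imp_lipschitz_on[OF F] by blast
  then have ac: "abs_continuous_on {0..T} (\<lambda>t. \<phi> (u' t) + F (ub + u t))"
    by (intro abs_continuous_on_add[OF ac_phi] lipschitz_on_imp_abs_continuous_on)
  obtain N where "negligible N" and N: "\<And>t. t \<in> {0..T} - N \<Longrightarrow>
      \<exists>w. ((\<lambda>s. \<phi> (u' s)) has_real_derivative w) (at t within {0..T}) \<and>
        w + f (ub + u t) * u' t + lam * g t (ub + u t) - lam / T * c = 0"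
    by (rule AE_lebesgue_on_intervalE[OF ae]) iprover
  have "((\<lambda>t. \<phi> (u' t) + F (ub + u t)) has_real_derivative lam / T * c - lam * g t (ub + u t))
      (at t within {0..T})" if t: "t \<in> {0..T} - N" for t
  proof -
    obtain w where w: "((\<lambda>s. \<phi> (u' s)) has_real_derivative w) (at t within {0..T})"
        "w + f (ub + u t) * u' t + lam * g t (ub + u t) - lam / T * c = 0"
      using N[OF t] by blast
    have "((\<lambda>t. \<phi> (u' t) + F (ub + u t)) has_real_derivative w + f (ub + u t) * u' t) (at t within {0..T})"
      using w(1) F t by (intro DERIV_add) auto
    moreover have "w + f (ub + u t) * u' t = lam / T * c - lam * g t (ub + u t)"
      using w(2) by linarith
    ultimately show ?thesis by simp
  qed
  with \<open>negligible N\<close> ac show thesis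
    unfolding c_def by (rule that)
qed

lemma dagger_sol_energy_oscillation:
  fixes \<phi> \<rho> f u u' :: "real \<Rightarrow> real" and g :: "real \<Rightarrow> real \<Rightarrow> real"
  assumes T: "T > 0"
    and \<rho>: "\<rho> integrable_on {0..T}" "\<And>t. t \<in> {0..T} \<Longrightarrow> 0 \<le> \<rho> t"
    and f: "continuous_on UNIV f" and g: "AE t in lebesgue_on {0..T}. \<forall>v. \<bar>g t v\<bar> \<le> \<rho> t"
    and lam: "0 \<le> lam" "lam \<le> 1" and sol: "dagger_sol T \<phi> f g lam ub u u'"
  obtains F where "\<And>s t. s \<in> {0..T} \<Longrightarrow> t \<in> {0..T} \<Longrightarrow>
    \<bar>\<phi> (u' t) + F (ub + u t) - (\<phi> (u' s) + F (ub + u s))\<bar> \<le> 2 * integral {0..T} \<rho>"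
proof -
  define c where "c = integral {0..T} (\<lambda>\<xi>. g \<xi> (ub + u \<xi>))"
  define P where "P = integral {0..T} \<rho>"
  obtain F N where "negligible N" and ac: "abs_continuous_on {0..T} (\<lambda>t. \<phi> (u' t) + F (ub + u t))"
    and deriv: "\<And>t. t \<in> {0..T} - N \<Longrightarrow> ((\<lambda>t. \<phi> (u' t) + F (ub + u t)) has_real_derivative
        lam / T * c - lam * g t (ub + u t)) (at t within {0..T})"
    by (rule dagger_sol_energy_derivative[OF f sol, folded c_def]) iprover
  obtain N' where "negligible N'" and N': "\<And>t. t \<in> {0..T} - N' \<Longrightarrow> \<forall>v. \<bar>g t v\<bar> \<le> \<rho> t"
    by (rule AE_lebesgue_on_intervalE[OF g]) iprover
  have "\<bar>c\<bar> \<le> P"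
    unfolding c_def P_def using g \<rho> by (intro abs_integral_le_AE_bound) (auto elim: AE_mp)
  define k where "k t = \<rho> t + P / T" for t
  have k: "k integrable_on {0..T}"
    unfolding k_def using \<rho>(1) by (intro integrable_add integrable_const_ivl)
  have "integral {0..T} k = integral {0..T} \<rho> + integral {0..T} (\<lambda>t. P / T)"
    unfolding k_def using \<rho>(1) by (intro integral_add integrable_const_ivl)
  then have k_integral: "integral {0..T} k = 2 * P"
    using T unfolding P_def by simp
  have bound: "\<bar>lam / T * c - lam * g t (ub + u t)\<bar> \<le> k t" if t: "t \<in> {0..T} - (N \<union> N')" for t
  proof -
    have "\<bar>lam / T * c - lam * g t (ub + u t)\<bar> \<le> \<bar>lam / T * c\<bar> + \<bar>lam * g t (ub + u t)\<bar>"
      by (rule abs_triangle_ineq4)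
    also have "\<dots> = lam / T * \<bar>c\<bar> + lam * \<bar>g t (ub + u t)\<bar>"
      using lam T by (simp add: abs_mult)
    also have "\<dots> \<le> 1 / T * P + 1 * \<rho> t"
      using lam T \<open>\<bar>c\<bar> \<le> P\<close> N'[of t] t
      by (intro add_mono mult_mono divide_right_mono) auto
    finally show ?thesis unfolding k_def by simp
  qed
  have "\<bar>\<phi> (u' t) + F (ub + u t) - (\<phi> (u' s) + F (ub + u s))\<bar> \<le> 2 * P"
    if "s \<in> {0..T}" "t \<in> {0..T}" for s t
    using abs_continuous_on_dist_le_integral[OF ac negligible_Un[OF \<open>negligible N\<close> \<open>negligible N'\<close>]
        _ k bound that] deriv k_integral by auto
  then show thesis
    unfolding P_def by (rule that)
qed

lemma dagger_sol_phi_derivative_bound: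
  fixes \<phi> \<rho> f u u' :: "real \<Rightarrow> real" and g :: "real \<Rightarrow> real \<Rightarrow> real"
  assumes T: "T > 0"
    and \<rho>: "\<rho> integrable_on {0..T}" "\<And>t. t \<in> {0..T} \<Longrightarrow> 0 \<le> \<rho> t"
    and f: "continuous_on UNIV f" and g: "AE t in lebesgue_on {0..T}. \<forall>v. \<bar>g t v\<bar> \<le> \<rho> t"
    and lam: "0 \<le> lam" "lam \<le> 1" and sol: "dagger_sol T \<phi> f g lam ub u u'"
    and \<phi>: "strict_mono \<phi>" "\<phi> 0 = 0"
    and t: "t \<in> {0..T}"
  shows "\<bar>\<phi> (u' t)\<bar> \<le> 2 * integral {0..T} \<rho>"
proof -
  define P where "P = integral {0..T} \<rho>"
  have "0 \<le> P"
    unfolding P_def using \<rho> by (intro integral_nonneg) auto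
  obtain F where osc: "\<And>s t. s \<in> {0..T} \<Longrightarrow> t \<in> {0..T} \<Longrightarrow>
      \<bar>\<phi> (u' t) + F (ub + u t) - (\<phi> (u' s) + F (ub + u s))\<bar> \<le> 2 * P"
    using dagger_sol_energy_oscillation[OF T \<rho> f g lam sol] unfolding P_def by blast
  from sol have deriv: "\<And>t. t \<in> {0..T} \<Longrightarrow> (u has_real_derivative u' t) (at t within {0..T})"
    and periodic: "u 0 = u T" "u' 0 = u' T"
    unfolding dagger_sol_def in_Dt_def in_D_def by auto
  have sign: "\<phi> x \<le> 0 \<longleftrightarrow> x \<le> 0" "0 \<le> \<phi> x \<longleftrightarrow> 0 \<le> x" for x
    using strict_mono_less_eq[OF \<phi>(1)] \<phi>(2) by metis+
  have "\<phi> (u' t) \<le> 2 * P"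
  proof (cases "u' t > 0")
    case True
    then obtain s where "s \<in> {0..T}" "u s = u t" "u' s \<le> 0"
      using periodic_level_nonpos_derivative[OF T deriv periodic t] by blast
    then show ?thesis
      using osc[OF \<open>s \<in> {0..T}\<close> t] sign(1)[of "u' s"] by simp
  next
    case False
    then show ?thesis using sign(1)[of "u' t"] \<open>0 \<le> P\<close> by simp
  qed
  moreover have "- 2 * P \<le> \<phi> (u' t)"
  proof (cases "u' t < 0")
    case True
    then obtain s where "s \<in> {0..T}" "u s = u t" "u' s \<ge> 0"
      using periodic_level_nonneg_derivative[OF T deriv periodic t(1)] by blast
    then show ?thesis
      using osc[OF t \<open>s \<in> {0..T}\<close>] sign(2)[of "u' s"] by simp
  next
    case False
    then show ?thesis using sign(2)[of "u' t"] \<open>0 \<le> P\<close> by simp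
  qed
  ultimately show ?thesis
    unfolding P_def by linarith
qed

lemma zero_mean_abs_le_derivative_bound:
  fixes u u' :: "real \<Rightarrow> real"
  assumes T: "0 < T"
    and deriv: "\<And>t. t \<in> {0..T} \<Longrightarrow> (u has_real_derivative u' t) (at t within {0..T})"
    and mean: "integral {0..T} u = 0"
    and bound: "\<And>t. t \<in> {0..T} \<Longrightarrow> \<bar>u' t\<bar> \<le> B"
    and t: "t \<in> {0..T}"
  shows "\<bar>u t\<bar> \<le> B * T"
proof -
  have "continuous_on {0..T} u"
    using deriv by (meson DERIV_continuous continuous_on_eq_continuous_within)
  then obtain t0 where t0: "t0 \<in> {0..T}" "u t0 = 0"
    using continuous_on_zero_integral_imp_root[OF T _ mean] by blast
  have "\<bar>u t - u t0\<bar> \<le> B * \<bar>t - t0\<bar>"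
    using field_differentiable_bound[of "{0..T}" u u' B t t0] deriv bound t t0
    by (auto simp: convex_real_interval)
  also have "\<dots> \<le> B * T"
    using t t0 bound[OF t] by (intro mult_left_mono) auto
  finally show ?thesis
    using t0 by simp
qed

lemma dagger_sol_bounds:
  fixes \<phi> \<psi> \<rho> f u u' :: "real \<Rightarrow> real" and g :: "real \<Rightarrow> real \<Rightarrow> real"
  assumes T: "T > 0"
    and \<rho>: "\<rho> integrable_on {0..T}" "\<And>t. t \<in> {0..T} \<Longrightarrow> 0 \<le> \<rho> t"
    and f: "continuous_on UNIV f" and g: "AE t in lebesgue_on {0..T}. \<forall>v. \<bar>g t v\<bar> \<le> \<rho> t"
    and lam: "lam \<in> {0..1}" and sol: "dagger_sol T \<phi> f g lam ub u u'"
    and \<phi>: "strict_mono \<phi>" "\<phi> 0 = 0" and \<psi>: "\<And>y. \<phi> (\<psi> y) = y"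
  defines "B \<equiv> \<bar>\<psi> (2 * integral {0..T} \<rho>)\<bar> + \<bar>\<psi> (- 2 * integral {0..T} \<rho>)\<bar>"
  shows "integral {0..T} (\<lambda>t. \<bar>u' t\<bar>) \<le> B * T"
    and "\<forall>t\<in>{0..T}. \<bar>u t\<bar> \<le> B * T"
    and "(SUP t\<in>{0..T}. \<bar>u t\<bar>) + (SUP t\<in>{0..T}. \<bar>u' t\<bar>) \<le> B * T + B"
proof -
  from sol have deriv: "\<And>t. t \<in> {0..T} \<Longrightarrow> (u has_real_derivative u' t) (at t within {0..T})"
    and u'_cont: "continuous_on {0..T} u'" and mean: "integral {0..T} u = 0"
    unfolding dagger_sol_def in_Dt_def in_D_def by auto
  have u'_bound: "\<bar>u' t\<bar> \<le> B" if t: "t \<in> {0..T}" for t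
  proof -
    have "\<phi> (\<psi> (- 2 * integral {0..T} \<rho>)) \<le> \<phi> (u' t)" "\<phi> (u' t) \<le> \<phi> (\<psi> (2 * integral {0..T} \<rho>))"
      using dagger_sol_phi_derivative_bound[OF T \<rho> f g _ _ sol \<phi> t] lam \<psi> by auto
    then show ?thesis
      unfolding B_def using strict_mono_less_eq[OF \<phi>(1)] by fastforce
  qed
  have u_bound: "\<bar>u t\<bar> \<le> B * T" if "t \<in> {0..T}" for t
    using zero_mean_abs_le_derivative_bound[OF T deriv mean u'_bound that] .
  then show "\<forall>t\<in>{0..T}. \<bar>u t\<bar> \<le> B * T" by blast
  have "integral {0..T} (\<lambda>t. \<bar>u' t\<bar>) \<le> integral {0..T} (\<lambda>t. B)"
    using u'_bound u'_cont
    by (intro integral_le integrable_continuous_interval continuous_intros) auto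
  then show "integral {0..T} (\<lambda>t. \<bar>u' t\<bar>) \<le> B * T"
    using T by (simp add: mult.commute)
  have "(SUP t\<in>{0..T}. \<bar>u t\<bar>) \<le> B * T" "(SUP t\<in>{0..T}. \<bar>u' t\<bar>) \<le> B"
    using u_bound u'_bound T by (auto intro!: cSUP_least)
  then show "(SUP t\<in>{0..T}. \<bar>u t\<bar>) + (SUP t\<in>{0..T}. \<bar>u' t\<bar>) \<le> B * T + B"
    by linarith
qed

lemma incr_homeoE:
  assumes "incr_homeo \<phi>"
  obtains \<psi> where "strict_mono \<phi>" "\<And>y. \<phi> (\<psi> y) = y"
  using assms unfolding incr_homeo_def homeomorphism_def by auto

theorem proposition3p1:
  fixes T :: real and \<phi> \<rho> :: "real \<Rightarrow> real"
  assumes T: "T > 0"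
    and phi: "incr_homeo \<phi>" "\<phi> 0 = 0"
    and rho: "integrable (lebesgue_on {0..T}) \<rho>" "\<forall>t\<in>{0..T}. \<rho> t \<ge> 0"
  shows
   "(\<exists>K>0. \<forall>f g. continuous_on UNIV f \<and> caratheodory T g \<and>
        (AE t in lebesgue_on {0..T}. \<forall>u. \<bar>g t u\<bar> \<le> \<rho> t) \<longrightarrow>
        (\<forall>lam ub u u'. lam \<in> {0..1} \<and> dagger_sol T \<phi> f g lam ub u u' \<longrightarrow>
           integral {0..T} (\<lambda>t. \<bar>u' t\<bar>) \<le> K \<and> (\<forall>t\<in>{0..T}. \<bar>u t\<bar> \<le> K)))
    \<and>
    (\<forall>f. continuous_on UNIV f \<longrightarrow>
      (\<forall>M>0. \<exists>M'>0. \<forall>g. caratheodory T g \<and>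
          (AE t in lebesgue_on {0..T}. \<forall>u. \<bar>g t u\<bar> \<le> \<rho> t) \<longrightarrow>
          (\<forall>ub u u'. \<bar>ub\<bar> \<le> M \<and> dagger_sol T \<phi> f g 1 ub u u' \<longrightarrow>
             (SUP t\<in>{0..T}. \<bar>u t\<bar>) + (SUP t\<in>{0..T}. \<bar>u' t\<bar>) \<le> M')))"
proof -
  obtain \<psi> where mono: "strict_mono \<phi>" and \<psi>: "\<And>y. \<phi> (\<psi> y) = y"
    using incr_homeoE[OF phi(1)] by blast
  have \<rho>_int: "\<rho> integrable_on {0..T}"
    using rho(1) by (rule integrable_on_lebesgue_on) simp
  define B where "B = \<bar>\<psi> (2 * integral {0..T} \<rho>)\<bar> + \<bar>\<psi> (- 2 * integral {0..T} \<rho>)\<bar>"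
  note bounds = dagger_sol_bounds[OF T \<rho>_int rho(2)[rule_format] _ _ _ _ mono phi(2) \<psi>, folded B_def]
  have "0 \<le> B * T" "0 \<le> B"
    using T by (simp_all add: B_def)
  show ?thesis
  proof (rule conjI, goal_cases)
    case 1
    show ?case
    proof (intro exI[of _ "B * T + 1"] conjI allI impI)
      fix f g lam ub u u'
      assume "continuous_on UNIV f \<and> caratheodory T g \<and> (AE t in lebesgue_on {0..T}. \<forall>v. \<bar>g t v\<bar> \<le> \<rho> t)"
        and "lam \<in> {0..1} \<and> dagger_sol T \<phi> f g lam ub u u'"
      then show "integral {0..T} (\<lambda>t. \<bar>u' t\<bar>) \<le> B * T + 1" "\<forall>t\<in>{0..T}. \<bar>u t\<bar> \<le> B * T + 1"
        using bounds(1,2)[of f g lam ub u u'] by auto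
    qed (use \<open>0 \<le> B * T\<close> in auto)
  next
    case 2
    show ?case
    proof (intro allI impI exI[of _ "B * T + B + 1"] conjI)
      fix f M g ub u u'
      assume "continuous_on UNIV f" "caratheodory T g \<and> (AE t in lebesgue_on {0..T}. \<forall>v. \<bar>g t v\<bar> \<le> \<rho> t)"
        and "\<bar>ub\<bar> \<le> M \<and> dagger_sol T \<phi> f g 1 ub u u'"
      then show "(SUP t\<in>{0..T}. \<bar>u t\<bar>) + (SUP t\<in>{0..T}. \<bar>u' t\<bar>) \<le> B * T + B + 1"
        using bounds(3)[of f g 1 ub u u'] by auto
    qed (use \<open>0 \<le> B * T\<close> \<open>0 \<le> B\<close> in auto)
  qed
qed

end
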